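(* Let $X$ be a Banach space, $(A_n)_{n\in\mathbb{Z}}$ a sequence of invertible bounded linear operators on $X$ with $\sup_n\lVert A_n\rVert<\infty$ admitting an exponential dichotomy, and let $1\le p<\infty$. For each sequence $(y_n)_{n\in\mathbb{Z}}\subset X$ with $\sum_{n\in\mathbb{Z}}\lVert y_{n+1}-A_ny_n\rVert^p<\infty$, there exists a unique sequence $(x_n)_{n\in\mathbb{Z}}\subset X$ with $x_{n+1}=A_nx_n$ for all $n\in\mathbb{Z}$ and $\sum_{n\in\mathbb{Z}}\lVert x_n-y_n\rVert^p<\infty$.
   Context: Exponential dichotomy: with $\mathcal A(m,n)=A_{m-1}\cdots A_n$ ($m>n$), $\mathrm{Id}$ ($m=n$), $A_m^{-1}\cdots A_{n-1}^{-1}$ ($m<n$), there exist projections $P_m$ on $X$ with $P_{m+1}A_m=A_mP_m$ for all $m$ and constants $C,\lambda>0$ with $\lVert\mathcal A(m,n)P_n\rVert\le Ce^{-\lambda(m-n)}$ for $m\ge n$ and $\lVert\mathcal A(m,n)(\mathrm{Id}-P_n)\rVert\le Ce^{-\lambda(n-m)}$ for $m\le n$. *)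

theory Defs
  imports "HOL-Analysis.Analysis"
begin

definition invertible_op :: "('a::real_normed_vector \<Rightarrow>\<^sub>L 'a) \<Rightarrow> bool" where
  "invertible_op B \<longleftrightarrow> (\<exists>C. C o\<^sub>L B = id_blinfun \<and> B o\<^sub>L C = id_blinfun)"

definition op_inv :: "('a::real_normed_vector \<Rightarrow>\<^sub>L 'a) \<Rightarrow> ('a \<Rightarrow>\<^sub>L 'a)" where
  "op_inv B = (SOME C. C o\<^sub>L B = id_blinfun \<and> B o\<^sub>L C = id_blinfun)"

fun fwd :: "(int \<Rightarrow> 'a::real_normed_vector \<Rightarrow>\<^sub>L 'a) \<Rightarrow> int \<Rightarrow> nat \<Rightarrow> 'a \<Rightarrow>\<^sub>L 'a" where
  "fwd A n 0 = id_blinfun"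
| "fwd A n (Suc k) = A (n + int k) o\<^sub>L fwd A n k"

fun bwd :: "(int \<Rightarrow> 'a::real_normed_vector \<Rightarrow>\<^sub>L 'a) \<Rightarrow> int \<Rightarrow> nat \<Rightarrow> 'a \<Rightarrow>\<^sub>L 'a" where
  "bwd A n 0 = id_blinfun"
| "bwd A n (Suc k) = op_inv (A (n - int k - 1)) o\<^sub>L bwd A n k"

definition cocycle :: "(int \<Rightarrow> 'a::real_normed_vector \<Rightarrow>\<^sub>L 'a) \<Rightarrow> int \<Rightarrow> int \<Rightarrow> 'a \<Rightarrow>\<^sub>L 'a" where
  "cocycle A m n = (if n \<le> m then fwd A n (nat (m - n)) else bwd A n (nat (n - m)))"

definition exp_dichotomy :: "(int \<Rightarrow> 'a::real_normed_vector \<Rightarrow>\<^sub>L 'a) \<Rightarrow> bool" where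
  "exp_dichotomy A \<longleftrightarrow>
    (\<exists>P :: int \<Rightarrow> 'a \<Rightarrow>\<^sub>L 'a. \<exists>C lam :: real. C > 0 \<and> lam > 0 \<and>
      (\<forall>m. P m o\<^sub>L P m = P m) \<and>
      (\<forall>m. P (m + 1) o\<^sub>L A m = A m o\<^sub>L P m) \<and>
      (\<forall>m n. n \<le> m \<longrightarrow> norm (cocycle A m n o\<^sub>L P n) \<le> C * exp (- lam * real_of_int (m - n))) \<and>
      (\<forall>m n. m \<le> n \<longrightarrow> norm (cocycle A m n o\<^sub>L (id_blinfun - P n)) \<le> C * exp (- lam * real_of_int (n - m))))"

end

theory Submission
  imports Defs
begin

text \<open>Put \<open>b n = y (n + 1) - A n (y n)\<close>. The solution is \<open>x = y - z\<close> with
  \<open>z n = (\<Sum>k. G n k (b k))\<close>, where the Green function \<open>G n k\<close> is \<open>\<A>(n, k + 1) P (k + 1)\<close>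
  for \<open>k < n\<close> and \<open>- \<A>(n, k + 1) (Id - P (k + 1))\<close> otherwise. The dichotomy bounds
  \<open>\<parallel>G n k\<parallel>\<close> by \<open>C exp (- \<lambda> \<bar>n - k - 1\<bar>)\<close>, a summable kernel, so \<open>z\<close> lies in \<open>\<ell>\<^sup>p\<close> by
  Young's inequality. Conversely, the difference of two solutions is a bounded solution of
  the homogeneous equation; its stable part is dominated by its values in the far past and
  its unstable part by its values in the far future, so both vanish.\<close>

lemma op_inv_apply:
  assumes "invertible_op B"
  shows "op_inv B (B v) = v" "B (op_inv B v) = v"
proof -
  have "\<exists>C. C o\<^sub>L B = id_blinfun \<and> B o\<^sub>L C = id_blinfun"
    using assms unfolding invertible_op_def .
  then have "op_inv B o\<^sub>L B = id_blinfun" "B o\<^sub>L op_inv B = id_blinfun"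
    unfolding op_inv_def by (metis (mono_tags, lifting) someI_ex)+
  then show "op_inv B (B v) = v" "B (op_inv B v) = v"
    by (metis blinfun_apply_blinfun_compose blinfun_apply_id_blinfun)+
qed

lemma cocycle_self [simp]: "cocycle A m m = id_blinfun"
  by (simp add: cocycle_def)

lemma cocycle_step:
  assumes "\<And>n. invertible_op (A n)"
  shows "A m (cocycle A m n v) = cocycle A (m + 1) n v"
proof -
  consider "n \<le> m" | "n = m + 1" | "m + 1 < n" by linarith
  then show ?thesis
  proof cases
    case 1
    moreover have "nat (m + 1 - n) = Suc (nat (m - n))" "n + int (nat (m - n)) = m"
      using 1 by simp_all
    ultimately show ?thesis using 1 by (simp add: cocycle_def)
  next
    case 2
    then show ?thesis by (simp add: cocycle_def nat_add_distrib op_inv_apply assms)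
  next
    case 3
    then have "nat (n - m) = Suc (nat (n - (m + 1)))" "n - int (nat (n - (m + 1))) - 1 = m" by simp_all
    with 3 have "cocycle A m n = op_inv (A m) o\<^sub>L cocycle A (m + 1) n"
      by (simp add: cocycle_def)
    then show ?thesis by (simp add: op_inv_apply assms)
  qed
qed

lemma solution_eq_cocycle:
  assumes inv: "\<And>n. invertible_op (A n)"
    and w: "\<And>n. w (n + 1) = A n (w n)"
  shows "w m = cocycle A m n (w n)"
proof (cases "n \<le> m")
  case True
  then show ?thesis
  proof (induction m rule: int_ge_induct)
    case (step i)
    then have "w (i + 1) = A i (cocycle A i n (w n))" by (simp add: w)
    then show ?case using cocycle_step[of A i n "w n", OF inv] by simp
  qed simp
next
  case False
  then have "m \<le> n" by simp
  then show ?thesis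
  proof (induction m rule: int_le_induct)
    case (step i)
    have "A (i - 1) (w (i - 1)) = A (i - 1) (cocycle A (i - 1) n (w n))"
      using w[of "i - 1"] cocycle_step[of A "i - 1" n "w n", OF inv] step by simp
    then show ?case using op_inv_apply(1)[OF inv[of "i - 1"]] by metis
  qed simp
qed

lemma powr_summable_imp_bounded:
  fixes g :: "'i \<Rightarrow> real"
  assumes "(\<lambda>n. g n powr p) summable_on UNIV" "\<And>n. g n \<ge> 0" "p > 0"
  shows "\<exists>M. \<forall>n. g n \<le> M"
proof -
  have "g n \<le> (\<Sum>\<^sub>\<infinity>k. g k powr p) powr (1 / p)" for n
  proof -
    have "g n powr p \<le> (\<Sum>\<^sub>\<infinity>k. g k powr p)"
      using finite_sum_le_infsum[OF assms(1), of "{n}"] by simp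
    then have "(g n powr p) powr (1 / p) \<le> (\<Sum>\<^sub>\<infinity>k. g k powr p) powr (1 / p)"
      by (intro powr_mono2) (use assms in auto)
    then show ?thesis using assms by (simp add: powr_powr)
  qed
  then show ?thesis by blast
qed

lemma summable_on_exp_neg_abs:
  fixes lam :: real
  assumes "lam > 0"
  shows "(\<lambda>j::int. exp (- lam * \<bar>real_of_int j\<bar>)) summable_on UNIV"
proof -
  let ?e = "\<lambda>j::int. exp (- lam * \<bar>real_of_int j\<bar>)"
  have geom: "(\<lambda>n::nat. exp (- lam * real n)) summable_on UNIV"
    using summable_geometric[of "exp (- lam)"] assms
    by (subst summable_on_UNIV_nonneg_real_iff) (auto simp: exp_of_nat_mult[symmetric] mult.commute)
  have nonneg: "?e summable_on range int"
    using geom by (subst summable_on_reindex) (auto simp: o_def)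
  have "?e \<circ> (\<lambda>n. - int n - 1) = (\<lambda>n. exp (- lam) * exp (- lam * real n))"
    by (auto simp: o_def exp_add[symmetric] algebra_simps)
  then have neg: "?e summable_on range (\<lambda>n. - int n - 1)"
    using summable_on_cmult_right[OF geom]
    by (subst summable_on_reindex) (auto simp: inj_on_def)
  have "UNIV = range int \<union> range (\<lambda>n. - int n - 1)"
  proof -
    have "j \<in> range int \<union> range (\<lambda>n. - int n - 1)" for j :: int
    proof (cases "j \<ge> 0")
      case True
      then show ?thesis by (metis UnI1 nonneg_int_cases rangeI)
    next
      case False
      then have "j = - int (nat (- j - 1)) - 1" by simp
      then show ?thesis by blast
    qed
    then show ?thesis by blast
  qed
  moreover have "range int \<inter> range (\<lambda>n. - int n - 1) = {}" by auto
  ultimately show ?thesis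
    using summable_on_Un_disjoint[OF nonneg neg] by simp
qed

lemma le_0_if_exp_decay:
  fixes t K lam :: real
  assumes "lam > 0" "\<And>k::nat. t \<le> K * exp (- lam * real k)"
  shows "t \<le> 0"
proof -
  have "(\<lambda>k. exp (- lam) ^ k) \<longlonglongrightarrow> 0"
    using assms(1) by (intro LIMSEQ_power_zero) simp
  then have "(\<lambda>k::nat. K * exp (- lam * real k)) \<longlonglongrightarrow> K * 0"
    by (intro tendsto_mult tendsto_const) (simp add: exp_of_nat_mult[symmetric] mult.commute)
  then show ?thesis
    using assms(2) by (intro LIMSEQ_le_const[of _ 0]) auto
qed

lemma sum_weighted_powr_le:
  fixes w a :: "'i \<Rightarrow> real"
  assumes S: "finite S" and w: "\<And>i. w i > 0" and a: "\<And>i. a i \<ge> 0" and p: "1 \<le> p"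
  shows "(\<Sum>i\<in>S. w i * a i) powr p \<le> (\<Sum>i\<in>S. w i) powr (p - 1) * (\<Sum>i\<in>S. w i * a i powr p)"
proof -
  \<comment> \<open>\<open>powr_convex\<close> only covers positive arguments\<close>
  define S' where "S' = {i \<in> S. a i > 0}"
  have S': "finite S'" "S' \<subseteq> S" using S by (auto simp: S'_def)
  have vanish: "a i = 0" if "i \<in> S - S'" for i
    using a[of i] that by (auto simp: S'_def)
  have restrict: "(\<Sum>i\<in>S. w i * a i) = (\<Sum>i\<in>S'. w i * a i)"
    "(\<Sum>i\<in>S. w i * a i powr p) = (\<Sum>i\<in>S'. w i * a i powr p)"
    by (intro sum.mono_neutral_right S S'; use vanish in simp)+
  have rhs_nonneg: "0 \<le> (\<Sum>i\<in>S'. w i * a i powr p)"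
    using w by (intro sum_nonneg mult_nonneg_nonneg) (auto intro: less_imp_le)
  show ?thesis
  proof (cases "S' = {}")
    case True
    then show ?thesis
      using restrict rhs_nonneg by simp
  next
    case False
    define W where "W = (\<Sum>i\<in>S'. w i)"
    have "W > 0" unfolding W_def using False S' w by (intro sum_pos) auto
    have "(\<Sum>i\<in>S'. (w i / W) *\<^sub>R a i) powr p \<le> (\<Sum>i\<in>S'. (w i / W) * a i powr p)"
      using convex_on_sum[OF S'(1) False powr_convex[OF p], of "\<lambda>i. w i / W" a] \<open>W > 0\<close> w
      by (auto simp: S'_def W_def sum_divide_distrib[symmetric] less_imp_le)
    then have "((\<Sum>i\<in>S'. w i * a i) / W) powr p \<le> (\<Sum>i\<in>S'. w i * a i powr p) / W"
      by (simp add: sum_divide_distrib)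
    moreover have "0 \<le> (\<Sum>i\<in>S'. w i * a i)"
      using w a by (intro sum_nonneg mult_nonneg_nonneg) (auto intro: less_imp_le)
    ultimately have "(\<Sum>i\<in>S'. w i * a i) powr p \<le> W powr p * ((\<Sum>i\<in>S'. w i * a i powr p) / W)"
      using \<open>W > 0\<close> by (simp add: powr_divide divide_le_eq mult.commute)
    also have "\<dots> = W powr (p - 1) * (\<Sum>i\<in>S'. w i * a i powr p)"
      using \<open>W > 0\<close> by (simp add: powr_diff)
    also have "\<dots> \<le> (\<Sum>i\<in>S. w i) powr (p - 1) * (\<Sum>i\<in>S'. w i * a i powr p)"
    proof (intro mult_right_mono powr_mono2 rhs_nonneg)
      show "W \<le> (\<Sum>i\<in>S. w i)"
        unfolding W_def using w by (intro sum_mono2 S S') (auto intro: less_imp_le)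
    qed (use p \<open>W > 0\<close> in auto)
    finally show ?thesis
      using restrict by simp
  qed
qed

lemma infsum_weighted_powr_le:
  fixes w a :: "'i \<Rightarrow> real"
  assumes w: "w summable_on UNIV" "\<And>i. w i > 0" and a: "\<And>i. a i \<ge> 0" and p: "1 \<le> p"
    and wa: "(\<lambda>i. w i * a i) summable_on UNIV"
    and wap: "(\<lambda>i. w i * a i powr p) summable_on UNIV"
  shows "(\<Sum>\<^sub>\<infinity>i. w i * a i) powr p \<le> (\<Sum>\<^sub>\<infinity>i. w i) powr (p - 1) * (\<Sum>\<^sub>\<infinity>i. w i * a i powr p)"
proof -
  define K where "K = (\<Sum>\<^sub>\<infinity>i. w i) powr (p - 1) * (\<Sum>\<^sub>\<infinity>i. w i * a i powr p)"
  have nonneg: "0 \<le> w i" "0 \<le> w i * a i" "0 \<le> w i * a i powr p" for i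
    using w(2)[of i] a[of i] by auto
  have "K \<ge> 0"
    unfolding K_def using nonneg by (intro mult_nonneg_nonneg infsum_nonneg) auto
  have "(\<Sum>i\<in>F. w i * a i) \<le> K powr (1 / p)" if F: "finite F" for F
  proof -
    have "(\<Sum>i\<in>F. w i * a i) powr p \<le> (\<Sum>i\<in>F. w i) powr (p - 1) * (\<Sum>i\<in>F. w i * a i powr p)"
      by (rule sum_weighted_powr_le[OF F w(2) a p])
    also have "\<dots> \<le> K"
      unfolding K_def using nonneg p
      by (intro mult_mono powr_mono2 finite_sum_le_infsum[OF w(1) F] finite_sum_le_infsum[OF wap F]
          sum_nonneg infsum_nonneg) auto
    finally have "((\<Sum>i\<in>F. w i * a i) powr p) powr (1 / p) \<le> K powr (1 / p)"
      using p by (intro powr_mono2) auto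
    then show ?thesis
      using p nonneg by (simp add: powr_powr sum_nonneg)
  qed
  then have "(\<Sum>\<^sub>\<infinity>i. w i * a i) \<le> K powr (1 / p)"
    by (intro infsum_le_finite_sums[OF wa]) auto
  then have "(\<Sum>\<^sub>\<infinity>i. w i * a i) powr p \<le> (K powr (1 / p)) powr p"
    using p nonneg by (intro powr_mono2 infsum_nonneg) auto
  also have "\<dots> = K"
    using \<open>K \<ge> 0\<close> p by (simp add: powr_powr)
  finally show ?thesis
    unfolding K_def .
qed

lemma has_sum_int_reflect: "((\<lambda>k::int. f (m - k)) has_sum S) UNIV \<longleftrightarrow> (f has_sum S) UNIV"
  by (rule has_sum_reindex_bij_betw, rule bij_betw_byWitness[where f' = "\<lambda>j. m - j"]) auto

lemma has_sum_int_translate: "((\<lambda>k::int. f (k - m)) has_sum S) UNIV \<longleftrightarrow> (f has_sum S) UNIV"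
  by (rule has_sum_reindex_bij_betw, rule bij_betw_byWitness[where f' = "\<lambda>j. j + m"]) auto

text \<open>Young's inequality for the convolution of an \<open>\<ell>\<^sup>1\<close> kernel with an \<open>\<ell>\<^sup>p\<close> sequence:
  Jensen's inequality for each \<open>n\<close>, then Tonelli.\<close>

lemma summable_on_convolution_powr:
  fixes K a :: "int \<Rightarrow> real"
  assumes K: "K summable_on UNIV" "\<And>j. K j > 0"
    and a: "(\<lambda>k. a k powr p) summable_on UNIV" "\<And>k. a k \<ge> 0" and p: "1 \<le> p"
  shows "(\<lambda>k. K (n - k) * a k) summable_on UNIV"
    and "(\<lambda>n. (\<Sum>\<^sub>\<infinity>k. K (n - k) * a k) powr p) summable_on UNIV"
proof -
  have K_reflect: "((\<lambda>k. K (m - k)) has_sum (\<Sum>\<^sub>\<infinity>j. K j)) UNIV" for m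
    using has_sum_infsum[OF K(1)] by (simp add: has_sum_int_reflect)
  have K_translate: "((\<lambda>m. K (m - k)) has_sum (\<Sum>\<^sub>\<infinity>j. K j)) UNIV" for k
    using has_sum_infsum[OF K(1)] by (simp add: has_sum_int_translate)
  have K_reflect_summable: "(\<lambda>k. K (m - k)) summable_on UNIV" for m
    using K_reflect by (rule has_sum_imp_summable)
  obtain M where M: "\<And>k. a k \<le> M"
    using powr_summable_imp_bounded[OF a] p by force
  have conv: "(\<lambda>k. K (m - k) * a k) summable_on UNIV" for m
    by (rule summable_on_comparison_test[OF summable_on_cmult_left[where c = M, OF K_reflect_summable]])
      (use K(2) a(2) M in \<open>auto intro!: mult_left_mono mult_nonneg_nonneg simp: less_imp_le\<close>)
  then show "(\<lambda>k. K (n - k) * a k) summable_on UNIV" .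
  have conv_powr: "(\<lambda>k. K (m - k) * a k powr p) summable_on UNIV" for m
    by (rule summable_on_comparison_test[OF
          summable_on_cmult_left[where c = "M powr p", OF K_reflect_summable]])
      (use K(2) a(2) M p in \<open>auto intro!: mult_left_mono mult_nonneg_nonneg powr_mono2 simp: less_imp_le\<close>)
  have "(\<lambda>(k, m). K (m - k) * a k powr p) summable_on UNIV \<times> UNIV"
  proof (rule summable_on_SigmaI)
    show "((\<lambda>m. (\<lambda>(k, m). K (m - k) * a k powr p) (k, m))
        has_sum (\<Sum>\<^sub>\<infinity>j. K j) * a k powr p) UNIV" for k
      using has_sum_cmult_left[OF K_translate] by simp
    show "(\<lambda>k. (\<Sum>\<^sub>\<infinity>j. K j) * a k powr p) summable_on UNIV"
      using summable_on_cmult_right[OF a(1)] .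
  qed (use K(2) in \<open>auto simp: less_imp_le\<close>)
  then have "(\<lambda>(m, k). K (m - k) * a k powr p) summable_on UNIV \<times> UNIV"
    by (subst summable_on_swap) simp
  then have T: "(\<lambda>m. \<Sum>\<^sub>\<infinity>k. K (m - k) * a k powr p) summable_on UNIV"
    using summable_on_Sigma_banach[where f = "\<lambda>m k. K (m - k) * a k powr p"] by simp
  have "(\<Sum>\<^sub>\<infinity>k. K (m - k) * a k) powr p
      \<le> (\<Sum>\<^sub>\<infinity>j. K j) powr (p - 1) * (\<Sum>\<^sub>\<infinity>k. K (m - k) * a k powr p)" for m
    using infsum_weighted_powr_le[OF K_reflect_summable K(2) a(2) p conv conv_powr]
      infsumI[OF K_reflect] by simp
  then show "(\<lambda>n. (\<Sum>\<^sub>\<infinity>k. K (n - k) * a k) powr p) summable_on UNIV"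
    by (intro summable_on_comparison_test[OF summable_on_cmult_right[OF T]]) auto
qed

locale dichotomy =
  fixes A P :: "int \<Rightarrow> 'a::banach \<Rightarrow>\<^sub>L 'a" and C lam :: real
  assumes invertible: "\<And>n. invertible_op (A n)"
    and projection_comm: "\<And>m. P (m + 1) o\<^sub>L A m = A m o\<^sub>L P m"
    and stable_decay: "\<And>m n. n \<le> m \<Longrightarrow>
      norm (cocycle A m n o\<^sub>L P n) \<le> C * exp (- lam * real_of_int (m - n))"
    and unstable_decay: "\<And>m n. m \<le> n \<Longrightarrow>
      norm (cocycle A m n o\<^sub>L (id_blinfun - P n)) \<le> C * exp (- lam * real_of_int (n - m))"
    and C_pos: "C > 0" and lam_pos: "lam > 0"
begin

lemma bounded_solution_eq_0:
  assumes w: "\<And>n. w (n + 1) = A n (w n)" and bounded: "\<And>n. norm (w n) \<le> M"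
  shows "w m = 0"
proof -
  have P_step: "P (n + 1) (A n v) = A n (P n v)" for n v
    using projection_comm by (metis blinfun_apply_blinfun_compose)
  define u where "u n = P n (w n)" for n
  define v where "v n = w n - P n (w n)" for n
  have "u (n + 1) = A n (u n)" "v (n + 1) = A n (v n)" for n
    by (simp_all add: u_def v_def w P_step blinfun.diff_right)
  then have u_evol: "u m = cocycle A m n (u n)" and v_evol: "v m = cocycle A m n (v n)" for n
    by (simp_all add: solution_eq_cocycle[of A, OF invertible])
  have "norm (u m) \<le> 0"
  proof (rule le_0_if_exp_decay[OF lam_pos])
    fix k :: nat
    have "norm (u m) = norm ((cocycle A m (m - int k) o\<^sub>L P (m - int k)) (w (m - int k)))"
      by (subst u_evol[of "m - int k"]) (simp add: u_def)
    also have "\<dots> \<le> C * exp (- lam * real k) * M"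
      using stable_decay[of "m - int k" m] bounded C_pos
      by (intro order.trans[OF norm_blinfun] mult_mono) (auto intro: order.trans[OF norm_ge_zero])
    finally show "norm (u m) \<le> C * M * exp (- lam * real k)" by (simp add: mult_ac)
  qed
  moreover have "norm (v m) \<le> 0"
  proof (rule le_0_if_exp_decay[OF lam_pos])
    fix k :: nat
    have "norm (v m) = norm ((cocycle A m (m + int k) o\<^sub>L (id_blinfun - P (m + int k))) (w (m + int k)))"
      by (subst v_evol[of "m + int k"]) (simp add: v_def blinfun.diff_left)
    also have "\<dots> \<le> C * exp (- lam * real k) * M"
      using unstable_decay[of m "m + int k"] bounded C_pos
      by (intro order.trans[OF norm_blinfun] mult_mono) (auto intro: order.trans[OF norm_ge_zero])
    finally show "norm (v m) \<le> C * M * exp (- lam * real k)" by (simp add: mult_ac)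
  qed
  ultimately show "w m = 0"
    by (simp add: u_def v_def)
qed

definition green :: "int \<Rightarrow> int \<Rightarrow> 'a \<Rightarrow>\<^sub>L 'a" where
  "green n k = (if k < n then cocycle A n (k + 1) o\<^sub>L P (k + 1)
     else - (cocycle A n (k + 1) o\<^sub>L (id_blinfun - P (k + 1))))"

lemma norm_green_le: "norm (green n k) \<le> C * exp (- lam * \<bar>real_of_int (n - k - 1)\<bar>)"
proof (cases "k < n")
  case True
  then have "norm (green n k) = norm (cocycle A n (k + 1) o\<^sub>L P (k + 1))"
    by (simp add: green_def)
  also have "\<dots> \<le> C * exp (- lam * real_of_int (n - (k + 1)))"
    using True by (intro stable_decay) simp
  also have "real_of_int (n - (k + 1)) = \<bar>real_of_int (n - k - 1)\<bar>"
    using True by simp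
  finally show ?thesis .
next
  case False
  then have "norm (green n k) = norm (cocycle A n (k + 1) o\<^sub>L (id_blinfun - P (k + 1)))"
    by (simp add: green_def)
  also have "\<dots> \<le> C * exp (- lam * real_of_int (k + 1 - n))"
    using False by (intro unstable_decay) simp
  also have "real_of_int (k + 1 - n) = \<bar>real_of_int (n - k - 1)\<bar>"
    using False by simp
  finally show ?thesis .
qed

lemma green_step: "green (n + 1) k v = A n (green n k v) + (if k = n then v else 0)"
proof -
  have step: "A n (cocycle A n m x) = cocycle A (n + 1) m x" for m x
    by (rule cocycle_step[of A, OF invertible])
  consider "k < n" | "k = n" | "n < k" by linarith
  then show ?thesis
    by cases (auto simp: green_def step blinfun.minus_left blinfun.diff_left blinfun.minus_right)
qed

lemma inhomogeneous_lp_solution_exists: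
  assumes b: "(\<lambda>n. norm (b n) powr p) summable_on UNIV" and p: "1 \<le> p"
  shows "\<exists>z. (\<forall>n. z (n + 1) = A n (z n) + b n) \<and> (\<lambda>n. norm (z n) powr p) summable_on UNIV"
proof -
  define K where "K j = C * exp (- lam * \<bar>real_of_int (j - 1)\<bar>)" for j
  have "(\<lambda>j. exp (- lam * \<bar>real_of_int (j - 1)\<bar>)) summable_on UNIV"
    using summable_on_exp_neg_abs[OF lam_pos]
      has_sum_int_translate[where f = "\<lambda>j. exp (- lam * \<bar>real_of_int j\<bar>)" and m = 1]
    unfolding summable_on_def by blast
  then have K_summable: "K summable_on UNIV"
    unfolding K_def by (rule summable_on_cmult_right)
  have K_pos: "K j > 0" for j
    unfolding K_def using C_pos by simp
  have green_le: "norm (green n k v) \<le> K (n - k) * norm v" for n k v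
    unfolding K_def using norm_green_le[of n k] norm_blinfun[of "green n k" v]
    by (simp add: mult_right_mono order.trans)
  note conv = summable_on_convolution_powr[OF K_summable K_pos b norm_ge_zero p]
  have green_summable: "(\<lambda>k. green n k (b k)) abs_summable_on UNIV" for n
    by (rule summable_on_comparison_test[OF conv(1)]) (use green_le in auto)
  define z where "z n = (\<Sum>\<^sub>\<infinity>k. green n k (b k))" for n
  have "z (n + 1) = A n (z n) + b n" for n
  proof -
    have "((\<lambda>k. A n (green n k (b k))) has_sum A n (z n)) UNIV"
      unfolding z_def using abs_summable_summable[OF green_summable]
      by (intro has_sum_bounded_linear[OF bounded_linear_blinfun_apply]) auto
    moreover have "((\<lambda>k. if k = n then b k else 0) has_sum b n) UNIV"
      by (rule has_sum_finite_neutralI[of "{n}"]) auto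
    ultimately have "((\<lambda>k. green (n + 1) k (b k)) has_sum A n (z n) + b n) UNIV"
      using has_sum_add by (fastforce simp: green_step)
    then show ?thesis
      unfolding z_def by (rule infsumI)
  qed
  moreover have "(\<lambda>n. norm (z n) powr p) summable_on UNIV"
  proof (rule summable_on_comparison_test[OF conv(2)])
    fix n
    have "norm (z n) \<le> (\<Sum>\<^sub>\<infinity>k. norm (green n k (b k)))"
      unfolding z_def by (rule norm_infsum_bound[OF green_summable])
    also have "\<dots> \<le> (\<Sum>\<^sub>\<infinity>k. K (n - k) * norm (b k))"
      by (rule infsum_mono[OF green_summable conv(1) green_le])
    finally show "norm (z n) powr p \<le> (\<Sum>\<^sub>\<infinity>k. K (n - k) * norm (b k)) powr p"
      using p by (intro powr_mono2) auto
  qed simp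
  ultimately show ?thesis by blast
qed

lemma lp_close_solution_exists:
  assumes y: "(\<lambda>n. norm (y (n + 1) - A n (y n)) powr p) summable_on UNIV" and p: "1 \<le> p"
  shows "\<exists>x. (\<forall>n. x (n + 1) = A n (x n)) \<and> (\<lambda>n. norm (x n - y n) powr p) summable_on UNIV"
proof -
  obtain z where z: "\<And>n. z (n + 1) = A n (z n) + (y (n + 1) - A n (y n))"
    and z_lp: "(\<lambda>n. norm (z n) powr p) summable_on UNIV"
    using inhomogeneous_lp_solution_exists[OF y p] by blast
  have "(\<forall>n. y (n + 1) - z (n + 1) = A n (y n - z n)) \<and>
    (\<lambda>n. norm (y n - z n - y n) powr p) summable_on UNIV"
    using z_lp by (simp add: z blinfun.diff_right)
  then show ?thesis by (rule exI[where x = "\<lambda>n. y n - z n"])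
qed

lemma lp_close_solution_unique:
  assumes p: "p > 0"
    and x1: "\<And>n. x1 (n + 1) = A n (x1 n)" "(\<lambda>n. norm (x1 n - y n) powr p) summable_on UNIV"
    and x2: "\<And>n. x2 (n + 1) = A n (x2 n)" "(\<lambda>n. norm (x2 n - y n) powr p) summable_on UNIV"
  shows "x1 = x2"
proof
  fix m
  obtain M1 M2 where M1: "\<And>n. norm (x1 n - y n) \<le> M1" and M2: "\<And>n. norm (x2 n - y n) \<le> M2"
    using powr_summable_imp_bounded[OF x1(2) norm_ge_zero p]
      powr_summable_imp_bounded[OF x2(2) norm_ge_zero p] by blast
  have "x1 m - x2 m = 0"
  proof (rule bounded_solution_eq_0)
    show "x1 (n + 1) - x2 (n + 1) = A n (x1 n - x2 n)" for n
      by (simp add: x1 x2 blinfun.diff_right)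
    show "norm (x1 n - x2 n) \<le> M1 + M2" for n
      using norm_triangle_ineq4[of "x1 n - y n" "x2 n - y n"] M1[of n] M2[of n] by simp
  qed
  then show "x1 m = x2 m" by simp
qed

end

theorem corollary3p9:
  fixes A :: "int \<Rightarrow> 'a::banach \<Rightarrow>\<^sub>L 'a" and p :: real and y :: "int \<Rightarrow> 'a"
  assumes "\<forall>n. invertible_op (A n)"
    and "bdd_above (range (\<lambda>n. norm (A n)))"
    and "exp_dichotomy A"
    and "1 \<le> p"
    and "(\<lambda>n. norm (y (n + 1) - A n (y n)) powr p) summable_on UNIV"
  shows "\<exists>!x :: int \<Rightarrow> 'a. (\<forall>n. x (n + 1) = A n (x n)) \<and>
           (\<lambda>n. norm (x n - y n) powr p) summable_on UNIV"
proof -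
  obtain P C lam where "dichotomy A P C lam"
    using assms(1,3) unfolding exp_dichotomy_def dichotomy_def by blast
  then interpret dichotomy A P C lam .
  obtain x where "\<forall>n. x (n + 1) = A n (x n)" "(\<lambda>n. norm (x n - y n) powr p) summable_on UNIV"
    using lp_close_solution_exists[OF assms(5,4)] by blast
  moreover have "p > 0" using assms(4) by simp
  ultimately show ?thesis
    using lp_close_solution_unique by blast
qed

end
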